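(* Let $H$ be a finite simple graph on vertex set $\{x_1,\dots,x_n\}$ ($n\ge 1$) and let $G=w(H)$ be its whiskered graph, a graph on $2n$ vertices. Then the independence complex $\operatorname{Ind}(G)$ is a pseudo-manifold (of dimension $n-1$). Moreover, if $|E(G)|\ge n+1$ (equivalently, $H$ has at least one edge), then $\operatorname{Ind}(G)$ is a pseudo-manifold with boundary.
   Context: All graphs are finite and simple. For a graph $H$ with vertex set $\{x_1,\dots,x_n\}$, the whiskered graph $w(H)$ has vertex set $\{x_1,\dots,x_n,y_1,\dots,y_n\}$ and edge set $E(H)\cup\{\{x_i,y_i\}: i=1,\dots,n\}$; a graph is called whiskered if it equals $w(H)$ for some graph $H$. A subset $W$ of the vertex set of a graph is independent if no edge has both endpoints in $W$; the independence complex $\operatorname{Ind}(G)$ is the simplicial complex whose faces are the independent sets of $G$. A face $F$ has dimension $|F|-1$; facets are maximal faces; a complex is pure if all facets have the same dimension. A $d$-dimensional simplicial complex $\Delta$ is a pseudo-manifold if (1) $\Delta$ is pure; (2) every $(d-1)$-dimensional face is contained in at most two facets; (3) for any two facets $F,F'$ there is a sequence of facets $F=G_0,G_1,\dots,G_t=F'$ with $\dim(G_i\cap G_{i+1})=d-1$ for all $i$. A pseudo-manifold has boundary if at least one $(d-1)$-dimensional face is contained in exactly one facet. *)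

theory Defs
  imports Main
begin

definition simple_graph :: "'a set \<Rightarrow> 'a set set \<Rightarrow> bool" where
  "simple_graph V E \<longleftrightarrow> finite V \<and>
     (\<forall>e\<in>E. \<exists>x y. x \<noteq> y \<and> x \<in> V \<and> y \<in> V \<and> e = {x, y})"

text \<open>Whiskered graph w(H): vertex x_i is Inl x, whisker vertex y_i is Inr x.\<close>
definition whisker_vertices :: "'a set \<Rightarrow> ('a + 'a) set" where
  "whisker_vertices V = Inl ` V \<union> Inr ` V"

definition whisker_edges :: "'a set \<Rightarrow> 'a set set \<Rightarrow> ('a + 'a) set set" where
  "whisker_edges V E = (\<lambda>e. Inl ` e) ` E \<union> (\<lambda>x. {Inl x, Inr x}) ` V"

definition independent_set :: "'b set \<Rightarrow> 'b set set \<Rightarrow> 'b set \<Rightarrow> bool" where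
  "independent_set V E W \<longleftrightarrow> W \<subseteq> V \<and> (\<forall>e\<in>E. \<not> e \<subseteq> W)"

definition Ind :: "'b set \<Rightarrow> 'b set set \<Rightarrow> 'b set set" where
  "Ind V E = {W. independent_set V E W}"

definition face_dim :: "'b set \<Rightarrow> int" where
  "face_dim F = int (card F) - 1"

definition complex_dim :: "'b set set \<Rightarrow> int" where
  "complex_dim \<Delta> = Max (face_dim ` \<Delta>)"

definition facets :: "'b set set \<Rightarrow> 'b set set" where
  "facets \<Delta> = {F \<in> \<Delta>. \<forall>G\<in>\<Delta>. F \<subseteq> G \<longrightarrow> G = F}"

definition pure_complex :: "'b set set \<Rightarrow> bool" where
  "pure_complex \<Delta> \<longleftrightarrow> (\<forall>F\<in>facets \<Delta>. \<forall>G\<in>facets \<Delta>. face_dim F = face_dim G)"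

definition pseudo_manifold :: "'b set set \<Rightarrow> bool" where
  "pseudo_manifold \<Delta> \<longleftrightarrow> (let d = complex_dim \<Delta> in
     pure_complex \<Delta> \<and>
     (\<forall>\<sigma>\<in>\<Delta>. face_dim \<sigma> = d - 1 \<longrightarrow> card {F \<in> facets \<Delta>. \<sigma> \<subseteq> F} \<le> 2) \<and>
     (\<forall>F\<in>facets \<Delta>. \<forall>F'\<in>facets \<Delta>. \<exists>gs. gs \<noteq> [] \<and> hd gs = F \<and> last gs = F' \<and>
        set gs \<subseteq> facets \<Delta> \<and>
        (\<forall>i. Suc i < length gs \<longrightarrow> face_dim (gs ! i \<inter> gs ! Suc i) = d - 1)))"

definition pseudo_manifold_with_boundary :: "'b set set \<Rightarrow> bool" where
  "pseudo_manifold_with_boundary \<Delta> \<longleftrightarrow> pseudo_manifold \<Delta> \<and>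
     (\<exists>\<sigma>\<in>\<Delta>. face_dim \<sigma> = complex_dim \<Delta> - 1 \<and> card {F \<in> facets \<Delta>. \<sigma> \<subseteq> F} = 1)"

end

theory Submission
  imports Defs
begin

text \<open>
  A maximal independent set of the whiskered graph \<open>w(H)\<close> contains, for every vertex \<open>x\<close>
  of \<open>H\<close>, exactly one of \<open>x\<close> and its whisker \<open>y\<close>; so all facets have \<open>n\<close> elements, and a
  face of dimension \<open>n - 2\<close> misses a whole pair \<open>{x, y}\<close>, hence lies in at most the two
  facets obtained by adding \<open>x\<close> or \<open>y\<close>. Replacing some \<open>x\<close> by its whisker \<open>y\<close> keeps a facet
  a facet and changes a single vertex, so every facet is joined to the facet of all whiskers.
  If \<open>H\<close> has an edge \<open>{a, b}\<close>, the face \<open>{x\<^sub>b} \<union> {y\<^sub>i : i \<noteq> a, b}\<close> can only be completed by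
  \<open>y\<^sub>a\<close>, so it lies on the boundary.
\<close>

definition facets_adjacent :: "'b set set \<Rightarrow> 'b set \<Rightarrow> 'b set \<Rightarrow> bool" where
  "facets_adjacent \<Delta> A B \<longleftrightarrow>
     A \<in> facets \<Delta> \<and> B \<in> facets \<Delta> \<and> face_dim (A \<inter> B) = complex_dim \<Delta> - 1"

lemma rtranclp_imp_path:
  assumes "Q\<^sup>*\<^sup>* a c" "c \<in> S" "\<And>x y. Q x y \<Longrightarrow> x \<in> S \<and> y \<in> S \<and> P x y"
  shows "\<exists>gs. gs \<noteq> [] \<and> hd gs = a \<and> last gs = c \<and> set gs \<subseteq> S \<and>
           (\<forall>i. Suc i < length gs \<longrightarrow> P (gs ! i) (gs ! Suc i))"
  using assms(1)
proof (induction rule: converse_rtranclp_induct)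
  case base
  show ?case using assms(2) by (intro exI[of _ "[c]"]) auto
next
  case (step y z)
  then obtain gs where gs: "gs \<noteq> []" "hd gs = z" "last gs = c" "set gs \<subseteq> S"
    "\<forall>i. Suc i < length gs \<longrightarrow> P (gs ! i) (gs ! Suc i)" by blast
  have "\<forall>i. Suc i < length (y # gs) \<longrightarrow> P ((y # gs) ! i) ((y # gs) ! Suc i)"
  proof (intro allI impI)
    fix i assume "Suc i < length (y # gs)"
    then show "P ((y # gs) ! i) ((y # gs) ! Suc i)"
      using gs step.hyps(1) assms(3)[of y z] by (cases i) (auto simp: hd_conv_nth)
  qed
  then show ?case using gs step.hyps(1) assms(3)[of y z] by (intro exI[of _ "y # gs"]) auto
qed

lemma pseudo_manifoldI:
  assumes "pure_complex \<Delta>"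
    and "\<And>\<sigma>. \<sigma> \<in> \<Delta> \<Longrightarrow> face_dim \<sigma> = complex_dim \<Delta> - 1 \<Longrightarrow> card {F \<in> facets \<Delta>. \<sigma> \<subseteq> F} \<le> 2"
    and "\<And>F F'. F \<in> facets \<Delta> \<Longrightarrow> F' \<in> facets \<Delta> \<Longrightarrow> (facets_adjacent \<Delta>)\<^sup>*\<^sup>* F F'"
  shows "pseudo_manifold \<Delta>"
  unfolding pseudo_manifold_def Let_def
proof (intro conjI ballI impI)
  fix F F' assume F: "F \<in> facets \<Delta>" and F': "F' \<in> facets \<Delta>"
  show "\<exists>gs. gs \<noteq> [] \<and> hd gs = F \<and> last gs = F' \<and> set gs \<subseteq> facets \<Delta> \<and>
      (\<forall>i. Suc i < length gs \<longrightarrow> face_dim (gs ! i \<inter> gs ! Suc i) = complex_dim \<Delta> - 1)"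
    by (rule rtranclp_imp_path[OF assms(3)[OF F F'] F']) (auto simp: facets_adjacent_def)
qed (use assms(1,2) in auto)

abbreviation whisker_Ind :: "'a set \<Rightarrow> 'a set set \<Rightarrow> ('a + 'a) set set" where
  "whisker_Ind V E \<equiv> Ind (whisker_vertices V) (whisker_edges V E)"

definition unwhisker :: "'a + 'a \<Rightarrow> 'a" where
  "unwhisker = case_sum id id"

lemma edges_nonempty_if_card_whisker_edges_gt:
  assumes "finite V" "card (whisker_edges V E) \<ge> card V + 1"
  shows "E \<noteq> {}"
proof
  assume "E = {}"
  then have "card (whisker_edges V E) \<le> card V"
    by (simp add: whisker_edges_def card_image_le assms(1))
  with assms(2) show False by simp
qed

context
  fixes V :: "'a set" and E :: "'a set set"
  assumes simple: "simple_graph V E"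
begin

lemma finite_vertices: "finite V"
  using simple by (simp add: simple_graph_def)

lemma edgeE:
  assumes "e \<in> E"
  obtains x y where "x \<noteq> y" "x \<in> V" "y \<in> V" "e = {x, y}"
  using simple assms by (auto simp: simple_graph_def)

lemma edge_subset_vertices: "e \<in> E \<Longrightarrow> e \<subseteq> V"
  by (elim edgeE) auto

lemma whisker_Ind_iff:
  "S \<in> whisker_Ind V E \<longleftrightarrow>
     S \<subseteq> Inl ` V \<union> Inr ` V \<and> (\<forall>x. \<not> (Inl x \<in> S \<and> Inr x \<in> S)) \<and> (\<forall>e\<in>E. \<not> Inl ` e \<subseteq> S)"
proof -
  have "S \<in> whisker_Ind V E \<longleftrightarrow> S \<subseteq> Inl ` V \<union> Inr ` V \<and>
      (\<forall>x\<in>V. \<not> (Inl x \<in> S \<and> Inr x \<in> S)) \<and> (\<forall>e\<in>E. \<not> Inl ` e \<subseteq> S)"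
    unfolding Ind_def independent_set_def whisker_vertices_def whisker_edges_def
    by (simp add: ball_Un conj_commute)
  then show ?thesis by blast
qed

lemma insert_Inr_in_whisker_Ind:
  assumes "S \<in> whisker_Ind V E" "x \<in> V" "Inl x \<notin> S"
  shows "insert (Inr x) S \<in> whisker_Ind V E"
  using assms unfolding whisker_Ind_iff by (auto simp: subset_insert_iff)

lemma facets_whisker_Ind_iff:
  "S \<in> facets (whisker_Ind V E) \<longleftrightarrow> S \<in> whisker_Ind V E \<and> (\<forall>x\<in>V. Inl x \<in> S \<or> Inr x \<in> S)"
proof
  assume facet: "S \<in> facets (whisker_Ind V E)"
  then have S: "S \<in> whisker_Ind V E" by (simp add: facets_def)
  have "Inl x \<in> S \<or> Inr x \<in> S" if "x \<in> V" for x
  proof (rule ccontr)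
    assume "\<not> (Inl x \<in> S \<or> Inr x \<in> S)"
    then have "insert (Inr x) S \<in> whisker_Ind V E" "insert (Inr x) S \<noteq> S"
      using insert_Inr_in_whisker_Ind[OF S \<open>x \<in> V\<close>] by auto
    with facet show False unfolding facets_def by blast
  qed
  with S show "S \<in> whisker_Ind V E \<and> (\<forall>x\<in>V. Inl x \<in> S \<or> Inr x \<in> S)" by blast
next
  assume S: "S \<in> whisker_Ind V E \<and> (\<forall>x\<in>V. Inl x \<in> S \<or> Inr x \<in> S)"
  have "T = S" if T: "T \<in> whisker_Ind V E" "S \<subseteq> T" for T
  proof
    have T_pairs: "T \<subseteq> Inl ` V \<union> Inr ` V" "\<forall>x. \<not> (Inl x \<in> T \<and> Inr x \<in> T)"
      using T(1) unfolding whisker_Ind_iff by blast+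
    show "T \<subseteq> S"
    proof
      fix z assume "z \<in> T"
      then obtain y where y: "y \<in> V" "z = Inl y \<or> z = Inr y" using T_pairs(1) by blast
      then have "Inl y \<in> S \<or> Inr y \<in> S" using S by blast
      then show "z \<in> S" using y(2) T(2) T_pairs(2) \<open>z \<in> T\<close> by blast
    qed
  qed (fact T(2))
  with S show "S \<in> facets (whisker_Ind V E)" unfolding facets_def by blast
qed

lemma unwhisker_face:
  assumes "S \<in> whisker_Ind V E"
  shows "inj_on unwhisker S" "unwhisker ` S \<subseteq> V"
proof -
  have S: "S \<subseteq> Inl ` V \<union> Inr ` V" "\<forall>x. \<not> (Inl x \<in> S \<and> Inr x \<in> S)"
    using assms unfolding whisker_Ind_iff by blast+
  show "inj_on unwhisker S"
  proof (rule inj_onI)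
    fix u v assume "u \<in> S" "v \<in> S" "unwhisker u = unwhisker v"
    then show "u = v" using S(2) by (cases u; cases v) (auto simp: unwhisker_def)
  qed
  show "unwhisker ` S \<subseteq> V" using S(1) by (auto simp: unwhisker_def)
qed

lemma finite_whisker_face: "S \<in> whisker_Ind V E \<Longrightarrow> finite S"
  using finite_vertices unfolding whisker_Ind_iff by (blast intro: finite_subset)

lemma card_whisker_face: "S \<in> whisker_Ind V E \<Longrightarrow> card S \<le> card V"
  using unwhisker_face card_inj_on_le finite_vertices by metis

lemma card_whisker_facet:
  assumes "S \<in> facets (whisker_Ind V E)"
  shows "card S = card V"
proof -
  have S: "S \<in> whisker_Ind V E" "\<forall>x\<in>V. Inl x \<in> S \<or> Inr x \<in> S"
    using assms unfolding facets_whisker_Ind_iff by blast+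
  have "V \<subseteq> unwhisker ` S"
    using S(2) by (force simp: unwhisker_def image_iff)
  then have "unwhisker ` S = V" using unwhisker_face(2)[OF S(1)] by blast
  then show ?thesis using card_image[OF unwhisker_face(1)[OF S(1)]] by simp
qed

lemma codim1_whisker_face_misses_pair:
  assumes "\<sigma> \<in> whisker_Ind V E" "card \<sigma> + 1 = card V"
  obtains x where "x \<in> V" "Inl x \<notin> \<sigma>" "Inr x \<notin> \<sigma>"
proof -
  have "\<not> V \<subseteq> unwhisker ` \<sigma>"
  proof
    assume "V \<subseteq> unwhisker ` \<sigma>"
    then have "card V \<le> card \<sigma>"
      using card_mono[OF finite_imageI[OF finite_whisker_face[OF assms(1)]]]
        card_image[OF unwhisker_face(1)[OF assms(1)]] by fastforce
    with assms(2) show False by simp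
  qed
  then obtain x where x: "x \<in> V" "x \<notin> unwhisker ` \<sigma>" by blast
  have "Inl x \<notin> \<sigma>" "Inr x \<notin> \<sigma>"
    using x(2) by (auto intro: rev_image_eqI simp: unwhisker_def)
  with x(1) show ?thesis by (rule that)
qed

lemma facets_containing_codim1_face:
  assumes "\<sigma> \<in> whisker_Ind V E" "card \<sigma> + 1 = card V" "x \<in> V" "Inl x \<notin> \<sigma>" "Inr x \<notin> \<sigma>"
  shows "{F \<in> facets (whisker_Ind V E). \<sigma> \<subseteq> F} \<subseteq> {insert (Inl x) \<sigma>, insert (Inr x) \<sigma>}"
proof
  fix F assume "F \<in> {F \<in> facets (whisker_Ind V E). \<sigma> \<subseteq> F}"
  then have F: "F \<in> facets (whisker_Ind V E)" "\<sigma> \<subseteq> F" by auto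
  have finite_F: "finite F"
    using F(1) finite_whisker_face by (simp add: facets_def)
  obtain u where u: "u \<in> F" "u = Inl x \<or> u = Inr x"
    using F(1) assms(3) unfolding facets_whisker_Ind_iff by blast
  have "card (insert u \<sigma>) = card F"
    using u assms(2,4,5) card_whisker_facet[OF F(1)] finite_subset[OF F(2) finite_F] by auto
  then have "insert u \<sigma> = F"
    using u F(2) finite_F by (intro card_subset_eq) auto
  then show "F \<in> {insert (Inl x) \<sigma>, insert (Inr x) \<sigma>}" using u by blast
qed

lemma whiskers_facet: "Inr ` V \<in> facets (whisker_Ind V E)"
proof -
  have "\<not> Inl ` e \<subseteq> Inr ` V" if "e \<in> E" for e
    using that by (elim edgeE) auto
  then show ?thesis unfolding facets_whisker_Ind_iff whisker_Ind_iff by blast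
qed

lemma finite_whisker_Ind: "finite (whisker_Ind V E)"
proof -
  have "whisker_Ind V E \<subseteq> Pow (Inl ` V \<union> Inr ` V)"
    using whisker_Ind_iff by blast
  then show ?thesis using finite_vertices by (simp add: finite_subset)
qed

lemma complex_dim_whisker_Ind: "complex_dim (whisker_Ind V E) = int (card V) - 1"
  unfolding complex_dim_def
proof (rule antisym)
  have "face_dim S \<le> int (card V) - 1" if "S \<in> whisker_Ind V E" for S
    using card_whisker_face[OF that] by (simp add: face_dim_def)
  then show "Max (face_dim ` whisker_Ind V E) \<le> int (card V) - 1"
    using whiskers_facet finite_whisker_Ind by (intro Max.boundedI) (auto simp: facets_def)
next
  have "Inr ` V \<in> whisker_Ind V E"
    using whiskers_facet by (simp add: facets_def)
  then have "face_dim (Inr ` V :: ('a + 'a) set) \<le> Max (face_dim ` whisker_Ind V E)"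
    using finite_whisker_Ind by simp
  then show "int (card V) - 1 \<le> Max (face_dim ` whisker_Ind V E)"
    by (simp add: face_dim_def card_image)
qed

lemma face_dim_eq_codim1_iff:
  assumes "V \<noteq> {}"
  shows "face_dim \<sigma> = complex_dim (whisker_Ind V E) - 1 \<longleftrightarrow> card \<sigma> + 1 = card V"
  using assms finite_vertices by (auto simp: complex_dim_whisker_Ind face_dim_def card_gt_0_iff)

lemma facet_adjacent_path_to_whiskers:
  assumes "V \<noteq> {}" "F \<in> facets (whisker_Ind V E)"
  shows "(facets_adjacent (whisker_Ind V E))\<^sup>*\<^sup>* F (Inr ` V)"
  using assms(2)
proof (induction "card {x\<in>V. Inl x \<in> F}" arbitrary: F rule: less_induct)
  case less
  have F: "F \<in> whisker_Ind V E" "\<forall>x\<in>V. Inl x \<in> F \<or> Inr x \<in> F"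
    using less.prems unfolding facets_whisker_Ind_iff by blast+
  have F_indep: "F \<subseteq> Inl ` V \<union> Inr ` V" "\<forall>x. \<not> (Inl x \<in> F \<and> Inr x \<in> F)"
    "\<forall>e\<in>E. \<not> Inl ` e \<subseteq> F"
    using F(1) unfolding whisker_Ind_iff by blast+
  show ?case
  proof (cases "\<exists>a\<in>V. Inl a \<in> F")
    case False
    then have "F = Inr ` V" using F(2) F_indep(1) by blast
    then show ?thesis by simp
  next
    case True
    then obtain a where a: "a \<in> V" "Inl a \<in> F" by blast
    define F' where "F' = insert (Inr a) (F - {Inl a})"
    have "F' \<in> whisker_Ind V E"
      unfolding whisker_Ind_iff F'_def using F_indep a by blast
    then have F'_facet: "F' \<in> facets (whisker_Ind V E)"
      unfolding facets_whisker_Ind_iff using F(2) by (auto simp: F'_def)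
    have Inl_part: "{x\<in>V. Inl x \<in> F'} = {x\<in>V. Inl x \<in> F} - {a}" by (auto simp: F'_def)
    have "card {x\<in>V. Inl x \<in> F'} < card {x\<in>V. Inl x \<in> F}"
      unfolding Inl_part using a finite_vertices by (intro card_Diff1_less) auto
    then have path: "(facets_adjacent (whisker_Ind V E))\<^sup>*\<^sup>* F' (Inr ` V)"
      using less.hyps F'_facet by blast
    have "F \<inter> F' = F - {Inl a}"
      using F_indep(2) a by (auto simp: F'_def)
    then have "card (F \<inter> F') + 1 = card V"
      using a card_whisker_facet[OF less.prems] finite_whisker_face[OF F(1)] assms(1)
        finite_vertices by (simp add: card_gt_0_iff)
    then have "facets_adjacent (whisker_Ind V E) F F'"
      using less.prems F'_facet face_dim_eq_codim1_iff[OF assms(1)]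
      unfolding facets_adjacent_def by blast
    then show ?thesis using path by (rule converse_rtranclp_into_rtranclp)
  qed
qed

lemma pseudo_manifold_whisker_Ind:
  assumes "V \<noteq> {}"
  shows "pseudo_manifold (whisker_Ind V E)"
proof (rule pseudo_manifoldI)
  show "pure_complex (whisker_Ind V E)"
    unfolding pure_complex_def face_dim_def by (simp add: card_whisker_facet)
next
  fix \<sigma> assume \<sigma>: "\<sigma> \<in> whisker_Ind V E" "face_dim \<sigma> = complex_dim (whisker_Ind V E) - 1"
  have card_\<sigma>: "card \<sigma> + 1 = card V" using \<sigma>(2) face_dim_eq_codim1_iff[OF assms] by blast
  obtain x where x: "x \<in> V" "Inl x \<notin> \<sigma>" "Inr x \<notin> \<sigma>"
    using codim1_whisker_face_misses_pair[OF \<sigma>(1) card_\<sigma>] .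
  have "card {F \<in> facets (whisker_Ind V E). \<sigma> \<subseteq> F} \<le> card {insert (Inl x) \<sigma>, insert (Inr x) \<sigma>}"
    by (intro card_mono facets_containing_codim1_face[OF \<sigma>(1) card_\<sigma> x]) simp
  also have "\<dots> \<le> 2" by (simp add: card_insert_if)
  finally show "card {F \<in> facets (whisker_Ind V E). \<sigma> \<subseteq> F} \<le> 2" .
next
  fix F F' assume "F \<in> facets (whisker_Ind V E)" "F' \<in> facets (whisker_Ind V E)"
  moreover have "symp (facets_adjacent (whisker_Ind V E))"
    by (auto intro: sympI simp: facets_adjacent_def Int_commute)
  ultimately show "(facets_adjacent (whisker_Ind V E))\<^sup>*\<^sup>* F F'"
    using facet_adjacent_path_to_whiskers[OF assms] symp_rtranclp
    by (metis rtranclp_trans sympD)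
qed

lemma boundary_face_of_edge:
  assumes "{a, b} \<in> E" "a \<noteq> b"
  defines "\<sigma> \<equiv> insert (Inl b) (Inr ` (V - {a, b}))"
  shows "\<sigma> \<in> whisker_Ind V E" "card \<sigma> + 1 = card V"
    and "{F \<in> facets (whisker_Ind V E). \<sigma> \<subseteq> F} = {insert (Inr a) \<sigma>}"
proof -
  have ab: "a \<in> V" "b \<in> V" using edge_subset_vertices[OF assms(1)] by auto
  have "\<not> Inl ` e \<subseteq> \<sigma>" if "e \<in> E" for e
    using that by (elim edgeE) (auto simp: \<sigma>_def)
  then show \<sigma>: "\<sigma> \<in> whisker_Ind V E"
    unfolding whisker_Ind_iff using ab by (auto simp: \<sigma>_def)
  have "card \<sigma> = card (V - {a, b}) + 1"
    unfolding \<sigma>_def using finite_vertices by (subst card_insert_disjoint) (auto simp: card_image)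
  moreover have "card {a, b} \<le> card V"
    using ab finite_vertices by (intro card_mono) auto
  then have "card (V - {a, b}) + 2 = card V"
    using ab assms(2) finite_vertices by (simp add: card_Diff_subset)
  ultimately show card_\<sigma>: "card \<sigma> + 1 = card V" by simp
  have not_in: "Inl a \<notin> \<sigma>" "Inr a \<notin> \<sigma>" using assms(2) by (auto simp: \<sigma>_def)
  have "insert (Inl a) \<sigma> \<notin> whisker_Ind V E"
    using assms(1) unfolding whisker_Ind_iff by (auto simp: \<sigma>_def)
  moreover have "insert (Inr a) \<sigma> \<in> facets (whisker_Ind V E)"
    using insert_Inr_in_whisker_Ind[OF \<sigma> ab(1) not_in(1)]
    unfolding facets_whisker_Ind_iff by (auto simp: \<sigma>_def)
  ultimately show "{F \<in> facets (whisker_Ind V E). \<sigma> \<subseteq> F} = {insert (Inr a) \<sigma>}"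
    using facets_containing_codim1_face[OF \<sigma> card_\<sigma> ab(1) not_in]
    by (auto simp: facets_def)
qed

lemma pseudo_manifold_with_boundary_whisker_Ind:
  assumes "E \<noteq> {}"
  shows "pseudo_manifold_with_boundary (whisker_Ind V E)"
proof -
  obtain e where e: "e \<in> E" using assms by blast
  then obtain a b where "a \<noteq> b" "a \<in> V" "b \<in> V" "e = {a, b}" by (rule edgeE)
  with e have ab: "{a, b} \<in> E" "a \<noteq> b" "a \<in> V" by simp_all
  define \<sigma> where "\<sigma> = insert (Inl b) (Inr ` (V - {a, b}))"
  have "V \<noteq> {}" using ab(3) by blast
  have "face_dim \<sigma> = complex_dim (whisker_Ind V E) - 1"
    using boundary_face_of_edge(2)[OF ab(1,2)] face_dim_eq_codim1_iff[OF \<open>V \<noteq> {}\<close>]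
    unfolding \<sigma>_def by blast
  moreover have "card {F \<in> facets (whisker_Ind V E). \<sigma> \<subseteq> F} = 1"
    using boundary_face_of_edge(3)[OF ab(1,2)] unfolding \<sigma>_def by simp
  ultimately show ?thesis
    using pseudo_manifold_whisker_Ind[OF \<open>V \<noteq> {}\<close>] boundary_face_of_edge(1)[OF ab(1,2)]
    unfolding pseudo_manifold_with_boundary_def \<sigma>_def by blast
qed

end

theorem theorem3p1:
  fixes V :: "'a set" and E :: "'a set set"
  assumes "simple_graph V E" and "V \<noteq> {}"
  shows "pseudo_manifold (Ind (whisker_vertices V) (whisker_edges V E))
       \<and> complex_dim (Ind (whisker_vertices V) (whisker_edges V E)) = int (card V) - 1
       \<and> (card (whisker_edges V E) \<ge> card V + 1 \<longrightarrow>
            pseudo_manifold_with_boundary (Ind (whisker_vertices V) (whisker_edges V E)))"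
  using pseudo_manifold_whisker_Ind[OF assms] complex_dim_whisker_Ind[OF assms(1)]
    pseudo_manifold_with_boundary_whisker_Ind[OF assms(1)]
    edges_nonempty_if_card_whisker_edges_gt[OF finite_vertices[OF assms(1)]]
  by blast

end
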